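(* Let $\Phi\colon\mathbb X\rightrightarrows\mathbb Y$ have closed graph, $(\bar x,\bar y)\in\operatorname{gph}\Phi$ and $u\in\mathbb S_{\mathbb X}$. If $\Phi$ is quasi-normal in direction $u$ at $(\bar x,\bar y)$ with respect to some orthonormal basis $\{e_1,\dots,e_m\}$ of $\mathbb Y$, then $\Phi$ is strongly asymptotically regular at $(\bar x,\bar y)$ in direction $u$ and metrically subregular at $(\bar x,\bar y)$ in direction $u$.
   Context: $\widehat D^*$ regular coderivative; $D^*\Phi((\bar x,\bar y);(u,v))(y^* )=\{x^*\mid(x^*,-y^* )\in\mathcal N_{\operatorname{gph}\Phi}((\bar x,\bar y);(u,v))\}$ with $\mathcal N_Q(\bar z;w)$ the directional limiting normal cone (all limits of $\eta_k\in\widehat{\mathcal N}_Q(\bar z+t_kw_k)$, $w_k\to w$, $t_k\searrow0$); $\ker\Psi=\{y^*\mid0\in\Psi(y^* )\}$, $\operatorname{Im}\Psi=\bigcup_z\Psi(z)$. Quasi-normality in direction $u$ w.r.t. $\{e_i\}$: there is no nonzero $\lambda\in\ker D^*\Phi((\bar x,\bar y);(u,0))$ for which there exist $\{(x_k,y_k)\}\subset\operatorname{gph}\Phi$ with $x_k\ne\bar x$, $\{\lambda_k\}\subset\mathbb Y$, $\{\eta_k\}\subset\mathbb X$ with $x_k\to\bar x$, $y_k\to\bar y$, $\lambda_k\to\lambda$, $\eta_k\to0$, $(x_k-\bar x)/\|x_k-\bar x\|\to u$, $(y_k-\bar y)/\|x_k-\bar x\|\to0$, $\eta_k\in\widehat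 D^*\Phi(x_k,y_k)(\lambda_k)$ and $\langle\lambda,e_i\rangle\langle y_k-\bar y,e_i\rangle>0$ whenever $\langle\lambda,e_i\rangle\ne0$. Strong asymptotic regularity in direction $u$: for all $\{(x_k,y_k)\}\subset\operatorname{gph}\Phi$, $\{x_k^*\}$, $\{\lambda_k\}$, $x^*,y^*$ with $x_k\notin\Phi^{-1}(\bar y)$, $y_k\ne\bar y$, $x_k^*\in\widehat D^*\Phi(x_k,y_k)(\lambda_k)$, $x_k\to\bar x$, $y_k\to\bar y$, $x_k^*\to x^*$, $(x_k-\bar x)/\|x_k-\bar x\|\to u$, $(y_k-\bar y)/\|x_k-\bar x\|\to0$, $\|\lambda_k\|\to\infty$, $(y_k-\bar y)/\|y_k-\bar y\|-\lambda_k/\|\lambda_k\|\to0$, $(\|y_k-\bar y\|/\|x_k-\bar x\|)\lambda_k\to y^*$, we have $x^*\in\operatorname{Im}D^*\Phi((\bar x,\bar y);(u,0))$. Metric subregularity in direction $u$: there are $\varepsilon,\delta,\kappa>0$ with $\operatorname{dist}(x,\Phi^{-1}(\bar y))\le\kappa\operatorname{dist}(\bar y,\Phi(x))$ for all $x\in\bar x+\mathbb B_{\varepsilon,\delta}(u)$, where $\mathbb B_{\varepsilon,\delta}(u)=\{v\mid \|\|v\|u-\|u\|v\|\le\delta\|u\|\|v\|,\ \|v\|\le\varepsilon\}$. *)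

theory Defs
  imports "HOL-Analysis.Analysis"
begin

text \<open>Set-valued maps \<Phi> : X \<rightrightarrows> Y are modelled as functions 'a \<Rightarrow> 'b set
  between Euclidean spaces; X \<times> Y carries the product inner product.\<close>

definition gph :: "('a \<Rightarrow> 'b set) \<Rightarrow> ('a \<times> 'b) set" where
  "gph \<Phi> = {(x, y). y \<in> \<Phi> x}"

definition preimg :: "('a \<Rightarrow> 'b set) \<Rightarrow> 'b \<Rightarrow> 'a set" where
  "preimg \<Phi> y = {x. y \<in> \<Phi> x}"

definition reg_normal_cone :: "'a::real_inner set \<Rightarrow> 'a \<Rightarrow> 'a set" where
  "reg_normal_cone Q z = {\<eta>. z \<in> Q \<and>
     (\<forall>\<epsilon>>0. \<exists>\<delta>>0. \<forall>z'\<in>Q. norm (z' - z) < \<delta> \<longrightarrow> inner \<eta> (z' - z) \<le> \<epsilon> * norm (z' - z))}"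

definition dir_lim_normal_cone :: "'a::real_inner set \<Rightarrow> 'a \<Rightarrow> 'a \<Rightarrow> 'a set" where
  "dir_lim_normal_cone Q z w = {\<eta>. \<exists>t wk \<eta>k.
      (\<forall>k. t k > (0::real)) \<and> t \<longlonglongrightarrow> 0 \<and> wk \<longlonglongrightarrow> w \<and> \<eta>k \<longlonglongrightarrow> \<eta> \<and>
      (\<forall>k. \<eta>k k \<in> reg_normal_cone Q (z + t k *\<^sub>R wk k))}"

definition reg_coderiv ::
  "('a::real_inner \<Rightarrow> 'b::real_inner set) \<Rightarrow> 'a \<Rightarrow> 'b \<Rightarrow> 'b \<Rightarrow> 'a set" where
  "reg_coderiv \<Phi> x y ys = {xs. (xs, - ys) \<in> reg_normal_cone (gph \<Phi>) (x, y)}"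

definition dir_coderiv ::
  "('a::real_inner \<Rightarrow> 'b::real_inner set) \<Rightarrow> 'a \<Rightarrow> 'b \<Rightarrow> 'a \<Rightarrow> 'b \<Rightarrow> 'b \<Rightarrow> 'a set" where
  "dir_coderiv \<Phi> x y u v ys = {xs. (xs, - ys) \<in> dir_lim_normal_cone (gph \<Phi>) (x, y) (u, v)}"

definition ker_mm :: "('b \<Rightarrow> 'a::zero set) \<Rightarrow> 'b set" where
  "ker_mm \<Psi> = {ys. 0 \<in> \<Psi> ys}"

definition Im_mm :: "('b \<Rightarrow> 'a set) \<Rightarrow> 'a set" where
  "Im_mm \<Psi> = (\<Union>z. \<Psi> z)"

definition orthonormal_basis :: "'b::euclidean_space set \<Rightarrow> bool" where
  "orthonormal_basis E \<longleftrightarrow> (\<forall>e\<in>E. norm e = 1) \<and> pairwise orthogonal E \<and> span E = UNIV"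

definition quasi_normal_dir ::
  "('a::euclidean_space \<Rightarrow> 'b::euclidean_space set) \<Rightarrow> 'a \<Rightarrow> 'b \<Rightarrow> 'a \<Rightarrow> 'b set \<Rightarrow> bool" where
  "quasi_normal_dir \<Phi> xb yb u E \<longleftrightarrow>
     \<not> (\<exists>lm. lm \<noteq> 0 \<and> lm \<in> ker_mm (dir_coderiv \<Phi> xb yb u 0) \<and>
        (\<exists>x y lam \<eta>. (\<forall>k. (x k, y k) \<in> gph \<Phi> \<and> x k \<noteq> xb) \<and>
           x \<longlonglongrightarrow> xb \<and> y \<longlonglongrightarrow> yb \<and> lam \<longlonglongrightarrow> lm \<and> \<eta> \<longlonglongrightarrow> 0 \<and>
           (\<lambda>k. (1 / norm (x k - xb)) *\<^sub>R (x k - xb)) \<longlonglongrightarrow> u \<and>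
           (\<lambda>k. (1 / norm (x k - xb)) *\<^sub>R (y k - yb)) \<longlonglongrightarrow> 0 \<and>
           (\<forall>k. \<eta> k \<in> reg_coderiv \<Phi> (x k) (y k) (lam k)) \<and>
           (\<forall>k. \<forall>e\<in>E. inner lm e \<noteq> 0 \<longrightarrow> inner lm e * inner (y k - yb) e > 0)))"

definition strongly_asymp_regular_dir ::
  "('a::euclidean_space \<Rightarrow> 'b::euclidean_space set) \<Rightarrow> 'a \<Rightarrow> 'b \<Rightarrow> 'a \<Rightarrow> bool" where
  "strongly_asymp_regular_dir \<Phi> xb yb u \<longleftrightarrow>
     (\<forall>x y xs lam xst yst.
        (\<forall>k. (x k, y k) \<in> gph \<Phi> \<and> x k \<notin> preimg \<Phi> yb \<and> y k \<noteq> yb \<and>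
             xs k \<in> reg_coderiv \<Phi> (x k) (y k) (lam k)) \<and>
        x \<longlonglongrightarrow> xb \<and> y \<longlonglongrightarrow> yb \<and> xs \<longlonglongrightarrow> xst \<and>
        (\<lambda>k. (1 / norm (x k - xb)) *\<^sub>R (x k - xb)) \<longlonglongrightarrow> u \<and>
        (\<lambda>k. (1 / norm (x k - xb)) *\<^sub>R (y k - yb)) \<longlonglongrightarrow> 0 \<and>
        filterlim (\<lambda>k. norm (lam k)) at_top sequentially \<and>
        (\<lambda>k. (1 / norm (y k - yb)) *\<^sub>R (y k - yb) - (1 / norm (lam k)) *\<^sub>R lam k) \<longlonglongrightarrow> 0 \<and>
        (\<lambda>k. (norm (y k - yb) / norm (x k - xb)) *\<^sub>R lam k) \<longlonglongrightarrow> yst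
      \<longrightarrow> xst \<in> Im_mm (dir_coderiv \<Phi> xb yb u 0))"

definition dir_nbhd :: "real \<Rightarrow> real \<Rightarrow> 'a::real_normed_vector \<Rightarrow> 'a set" where
  "dir_nbhd \<epsilon> \<delta> u = {v. norm (norm v *\<^sub>R u - norm u *\<^sub>R v) \<le> \<delta> * norm u * norm v \<and> norm v \<le> \<epsilon>}"

text \<open>Directional metric subregularity. The distance to the empty set is +\<infinity>
  (so the inequality is vacuous when \<Phi> x = {}); Isabelle's infdist to {} is 0,
  hence the explicit guard.\<close>
definition metric_subregular_dir ::
  "('a::euclidean_space \<Rightarrow> 'b::euclidean_space set) \<Rightarrow> 'a \<Rightarrow> 'b \<Rightarrow> 'a \<Rightarrow> bool" where
  "metric_subregular_dir \<Phi> xb yb u \<longleftrightarrow>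
     (\<exists>\<epsilon>>0. \<exists>\<delta>>0. \<exists>\<kappa>>0. \<forall>x. x - xb \<in> dir_nbhd \<epsilon> \<delta> u \<longrightarrow> \<Phi> x \<noteq> {} \<longrightarrow>
        infdist x (preimg \<Phi> yb) \<le> \<kappa> * infdist yb (\<Phi> x))"

end

theory Submission
  imports Defs
begin

text \<open>Both properties are proved by contradiction, and in both cases a failure produces
  points \<open>(x\<^sub>k, y\<^sub>k) \<rightarrow> (x\<^sub>b, y\<^sub>b)\<close> of the graph approaching in direction \<open>(u, 0)\<close>,
  together with regular coderivative elements \<open>\<eta>\<^sub>k \<rightarrow> 0\<close> whose unit multipliers are
  asymptotically aligned with \<open>y\<^sub>k - y\<^sub>b\<close>. A limit \<open>\<lambda>\<close> of the multipliers is then a nonzero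
  element of \<open>ker D\<^sup>*\<Phi>((x\<^sub>b, y\<^sub>b); (u, 0))\<close>, and the alignment yields the sign condition along
  the finite basis, contradicting quasi-normality. For strong asymptotic regularity the
  multipliers are the normalised \<open>\<lambda>\<^sub>k\<close> of the definition. For metric subregularity, a point
  \<open>x\<^sub>0\<close> violating the estimate with constant \<open>N\<^sup>4\<close> yields, by minimising the penalty
  \<open>\<parallel>y - y\<^sub>b\<parallel> + (N\<^sup>2/d) \<parallel>x - x\<^sub>0\<parallel>\<^sup>2\<close> over the graph near \<open>x\<^sub>0\<close> (with \<open>d = dist(x\<^sub>0, \<Phi>\<^sup>-\<^sup>1(y\<^sub>b))\<close>),
  a minimiser off \<open>\<Phi>\<^sup>-\<^sup>1(y\<^sub>b)\<close> whose optimality condition is a regular normal with multiplier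
  \<open>(y - y\<^sub>b)/\<parallel>y - y\<^sub>b\<parallel>\<close> and \<open>x\<close>-component of size \<open>O(1/N)\<close>.\<close>

lemma infdist_lessE:
  assumes "infdist x A < c" "A \<noteq> {}"
  obtains a where "a \<in> A" "dist x a < c"
proof -
  have "(INF a\<in>A. dist x a) < c" using assms infdist_notempty by metis
  then have "\<exists>a\<in>A. dist x a < c"
    by (subst (asm) cINF_less_iff) (use assms(2) in \<open>auto intro: bdd_belowI2[where m=0]\<close>)
  then show ?thesis using that by blast
qed

lemma tendsto_of_norm_diff_le:
  fixes f :: "nat \<Rightarrow> 'a::real_normed_vector"
  assumes "\<And>n. norm (f n - l) \<le> g n" "g \<longlonglongrightarrow> 0"
  shows "f \<longlonglongrightarrow> l"
proof -
  have "(\<lambda>n. f n - l) \<longlonglongrightarrow> 0" by (rule Lim_null_comparison) (use assms in auto)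
  then show ?thesis by (rule LIM_zero_cancel)
qed

lemma const_over_Suc_Suc_tendsto_zero: "(\<lambda>n. c / (real n + 2)) \<longlonglongrightarrow> 0"
  using LIMSEQ_ignore_initial_segment[OF lim_const_over_n[of c], of 2]
  by (simp add: add.commute)

lemma norm_le_quadratic_majorant:
  fixes a b :: "'a::real_inner"
  assumes "a \<noteq> 0"
  shows "norm b \<le> norm a + inner ((1 / norm a) *\<^sub>R a) (b - a) + (norm (b - a))\<^sup>2 / (2 * norm a)"
    (is "_ \<le> ?R")
proof -
  have na: "norm a > 0" using assms by simp
  have "norm a * ?R = (norm a)\<^sup>2 + (inner a b - inner a a) + (norm (b - a))\<^sup>2 / 2"
    using na by (simp add: inner_diff algebra_simps power2_eq_square)
  also have "\<dots> = ((norm a)\<^sup>2 + (norm b)\<^sup>2) / 2"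
  proof -
    have "(norm (b - a))\<^sup>2 = (norm b)\<^sup>2 - 2 * inner a b + (norm a)\<^sup>2"
      by (simp add: power2_norm_eq_inner inner_diff inner_commute algebra_simps)
    moreover have "inner a a = (norm a)\<^sup>2" by (simp add: power2_norm_eq_inner)
    ultimately show ?thesis by (simp add: field_simps)
  qed
  also have "\<dots> \<ge> norm a * norm b"
    using sum_squares_ge_zero[of "norm a - norm b" 0] by (simp add: power2_eq_square algebra_simps)
  finally show ?thesis using na by (simp add: mult_le_cancel_left_pos)
qed

lemma norm_normalized_diff_le:
  fixes v u :: "'a::real_normed_vector"
  assumes "norm u = 1" "v \<noteq> 0" "\<tau> > 0" "norm (v - \<tau> *\<^sub>R u) \<le> c * \<tau>"
  shows "norm ((1 / norm v) *\<^sub>R v - u) \<le> 2 * c"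
proof -
  have nv: "norm v > 0" using assms by simp
  have "\<bar>norm v - \<tau>\<bar> \<le> norm (v - \<tau> *\<^sub>R u)"
    using norm_triangle_ineq3[of v "\<tau> *\<^sub>R u"] assms by simp
  then have dev: "\<bar>norm v - \<tau>\<bar> / \<tau> \<le> c" "norm (v - \<tau> *\<^sub>R u) / \<tau> \<le> c"
    using assms(3,4) by (simp_all add: divide_le_eq)
  have "(1 / norm v) *\<^sub>R v - u = ((1 / norm v) - 1 / \<tau>) *\<^sub>R v + (1 / \<tau>) *\<^sub>R (v - \<tau> *\<^sub>R u)"
    using assms(3) by (simp add: algebra_simps)
  then have "norm ((1 / norm v) *\<^sub>R v - u) \<le> \<bar>1 / norm v - 1 / \<tau>\<bar> * norm v + norm (v - \<tau> *\<^sub>R u) / \<tau>"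
    using norm_triangle_ineq[of "((1 / norm v) - 1 / \<tau>) *\<^sub>R v" "(1 / \<tau>) *\<^sub>R (v - \<tau> *\<^sub>R u)"] assms(3)
    by simp
  also have "\<bar>1 / norm v - 1 / \<tau>\<bar> * norm v = \<bar>(1 / norm v - 1 / \<tau>) * norm v\<bar>"
    using nv by (simp add: abs_mult)
  also have "(1 / norm v - 1 / \<tau>) * norm v = (\<tau> - norm v) / \<tau>"
    using nv assms(3) by (simp add: field_simps)
  also have "\<bar>(\<tau> - norm v) / \<tau>\<bar> = \<bar>norm v - \<tau>\<bar> / \<tau>"
    using assms(3) by simp
  finally show ?thesis using dev by linarith
qed

lemma orthonormal_basis_finite:
  assumes "orthonormal_basis E" shows "finite E"
proof -
  have "0 \<notin> E" using assms unfolding orthonormal_basis_def by force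
  then have "independent E"
    using assms pairwise_orthogonal_independent unfolding orthonormal_basis_def by blast
  then show ?thesis by (rule finiteI_independent)
qed

lemma reg_normal_cone_scaleR:
  assumes "\<eta> \<in> reg_normal_cone Q z" "c > 0"
  shows "c *\<^sub>R \<eta> \<in> reg_normal_cone Q z"
  unfolding reg_normal_cone_def
proof (intro CollectI conjI allI impI)
  show "z \<in> Q" using assms(1) by (simp add: reg_normal_cone_def)
  fix \<epsilon> :: real assume "\<epsilon> > 0"
  then have "\<epsilon> / c > 0" using assms by simp
  then obtain \<delta> where "\<delta> > 0"
    and \<delta>: "\<And>z'. z' \<in> Q \<Longrightarrow> norm (z' - z) < \<delta> \<Longrightarrow> inner \<eta> (z' - z) \<le> \<epsilon> / c * norm (z' - z)"
    using assms(1) unfolding reg_normal_cone_def by blast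
  have "inner (c *\<^sub>R \<eta>) (z' - z) \<le> \<epsilon> * norm (z' - z)"
    if "z' \<in> Q" "norm (z' - z) < \<delta>" for z'
  proof -
    have "c * inner \<eta> (z' - z) \<le> c * (\<epsilon> / c * norm (z' - z))"
      using \<delta>[OF that] assms(2) by (simp only: mult_left_mono less_imp_le)
    then show ?thesis using assms(2) by simp
  qed
  with \<open>\<delta> > 0\<close> show "\<exists>\<delta>>0. \<forall>z'\<in>Q. norm (z' - z) < \<delta> \<longrightarrow> inner (c *\<^sub>R \<eta>) (z' - z) \<le> \<epsilon> * norm (z' - z)"
    by blast
qed

lemma eventually_sign_aligned:
  fixes y :: "nat \<Rightarrow> 'b::real_inner"
  assumes "finite E" and lim: "(\<lambda>k. (1 / norm (y k - yb)) *\<^sub>R (y k - yb)) \<longlonglongrightarrow> lm"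
  shows "\<forall>\<^sub>F k in sequentially. \<forall>e\<in>E. inner lm e \<noteq> 0 \<longrightarrow> inner lm e * inner (y k - yb) e > 0"
proof (rule eventually_ball_finite[OF \<open>finite E\<close>], intro ballI)
  fix e
  define D where "D k = (1 / norm (y k - yb)) *\<^sub>R (y k - yb)" for k
  show "\<forall>\<^sub>F k in sequentially. inner lm e \<noteq> 0 \<longrightarrow> inner lm e * inner (y k - yb) e > 0"
  proof (cases "inner lm e = 0")
    case False
    have "(\<lambda>k. inner lm e * inner (D k) e) \<longlonglongrightarrow> inner lm e * inner lm e"
      using lim unfolding D_def by (intro tendsto_intros)
    moreover have "inner lm e * inner lm e > 0"
      using False by (auto simp: zero_less_mult_iff)
    ultimately have "\<forall>\<^sub>F k in sequentially. inner lm e * inner (D k) e > 0"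
      by (rule order_tendstoD)
    then show ?thesis
    proof (rule eventually_mono)
      fix k assume pos: "inner lm e * inner (D k) e > 0"
      then have "y k \<noteq> yb" unfolding D_def by auto
      then have "inner (y k - yb) e = norm (y k - yb) * inner (D k) e"
        unfolding D_def by (simp only: inner_scaleR_left) simp
      then have "inner lm e * inner (y k - yb) e = norm (y k - yb) * (inner lm e * inner (D k) e)"
        by (simp add: algebra_simps)
      also have "\<dots> > 0" using pos \<open>y k \<noteq> yb\<close> by simp
      finally show "inner lm e \<noteq> 0 \<longrightarrow> inner lm e * inner (y k - yb) e > 0" by simp
    qed
  qed simp
qed

text \<open>The graph points are \<open>(x\<^sub>b, y\<^sub>b) + t\<^sub>k w\<^sub>k\<close> with \<open>t\<^sub>k = \<parallel>x\<^sub>k - x\<^sub>b\<parallel>\<close> and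
  \<open>w\<^sub>k \<rightarrow> (u, 0)\<close>, so the limit of the regular normals \<open>(\<eta>\<^sub>k, -\<lambda>\<^sub>k)\<close> is a directional limiting normal.\<close>

lemma limit_multiplier_in_ker_dir_coderiv:
  fixes \<Phi> :: "'a::euclidean_space \<Rightarrow> 'b::euclidean_space set"
  assumes pts: "\<And>k. (x k, y k) \<in> gph \<Phi> \<and> x k \<noteq> xb \<and> \<eta> k \<in> reg_coderiv \<Phi> (x k) (y k) (lam k)"
    and "x \<longlonglongrightarrow> xb" "lam \<longlonglongrightarrow> lm" "\<eta> \<longlonglongrightarrow> 0"
    and "(\<lambda>k. (1 / norm (x k - xb)) *\<^sub>R (x k - xb)) \<longlonglongrightarrow> u"
    and "(\<lambda>k. (1 / norm (x k - xb)) *\<^sub>R (y k - yb)) \<longlonglongrightarrow> 0"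
  shows "lm \<in> ker_mm (dir_coderiv \<Phi> xb yb u 0)"
proof -
  define t where "t k = norm (x k - xb)" for k
  define w where "w k = ((1 / t k) *\<^sub>R (x k - xb), (1 / t k) *\<^sub>R (y k - yb))" for k
  have t_pos: "t k > 0" for k using pts[of k] unfolding t_def by simp
  have "t \<longlonglongrightarrow> 0"
    unfolding t_def using \<open>x \<longlonglongrightarrow> xb\<close> by (intro tendsto_norm_zero LIM_zero)
  moreover have "w \<longlonglongrightarrow> (u, 0)" unfolding w_def t_def using assms by (intro tendsto_Pair)
  moreover have "(\<lambda>k. (\<eta> k, - lam k)) \<longlonglongrightarrow> (0, - lm)"
    using assms by (intro tendsto_Pair tendsto_minus)
  moreover have "(\<eta> k, - lam k) \<in> reg_normal_cone (gph \<Phi>) ((xb, yb) + t k *\<^sub>R w k)" for k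
  proof -
    have "(xb, yb) + t k *\<^sub>R w k = (x k, y k)" using t_pos[of k] unfolding w_def by simp
    then show ?thesis using pts[of k] unfolding reg_coderiv_def by simp
  qed
  ultimately show ?thesis
    unfolding ker_mm_def dir_coderiv_def dir_lim_normal_cone_def using t_pos by blast
qed

lemma quasi_normal_dir_no_aligned_unit_multipliers:
  fixes \<Phi> :: "'a::euclidean_space \<Rightarrow> 'b::euclidean_space set"
  assumes qn: "quasi_normal_dir \<Phi> xb yb u E" and fin: "finite E"
    and ev: "\<forall>\<^sub>F k in sequentially. (x k, y k) \<in> gph \<Phi> \<and> x k \<noteq> xb \<and> norm (lam k) = 1
               \<and> \<eta> k \<in> reg_coderiv \<Phi> (x k) (y k) (lam k)"
    and lx: "x \<longlonglongrightarrow> xb" and ly: "y \<longlonglongrightarrow> yb" and l\<eta>: "\<eta> \<longlonglongrightarrow> 0"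
    and lu: "(\<lambda>k. (1 / norm (x k - xb)) *\<^sub>R (x k - xb)) \<longlonglongrightarrow> u"
    and l0: "(\<lambda>k. (1 / norm (x k - xb)) *\<^sub>R (y k - yb)) \<longlonglongrightarrow> 0"
    and aligned: "(\<lambda>k. (1 / norm (y k - yb)) *\<^sub>R (y k - yb) - lam k) \<longlonglongrightarrow> 0"
  shows False
proof -
  define P where "P k \<longleftrightarrow> (x k, y k) \<in> gph \<Phi> \<and> x k \<noteq> xb \<and> norm (lam k) = 1
               \<and> \<eta> k \<in> reg_coderiv \<Phi> (x k) (y k) (lam k)" for k
  obtain N0 where N0: "\<And>k. k \<ge> N0 \<Longrightarrow> P k" using ev unfolding P_def eventually_sequentially by blast
  have "\<forall>k. lam (k + N0) \<in> sphere 0 1" using N0 unfolding P_def by simp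
  then obtain lm r where lm: "lm \<in> sphere (0::'b) 1" and "strict_mono r"
    and "((\<lambda>k. lam (k + N0)) \<circ> r) \<longlonglongrightarrow> lm"
    using seq_compactE[OF compact_imp_seq_compact[OF compact_sphere]] by metis
  define s0 where "s0 k = r k + N0" for k
  have s0: "strict_mono s0" using \<open>strict_mono r\<close> unfolding s0_def strict_mono_def by simp
  have lam_s0: "(\<lambda>k. lam (s0 k)) \<longlonglongrightarrow> lm"
    using \<open>((\<lambda>k. lam (k + N0)) \<circ> r) \<longlonglongrightarrow> lm\<close> unfolding s0_def o_def by simp
  have "(\<lambda>k. ((1 / norm (y (s0 k) - yb)) *\<^sub>R (y (s0 k) - yb) - lam (s0 k)) + lam (s0 k)) \<longlonglongrightarrow> 0 + lm"
    using LIMSEQ_subseq_LIMSEQ[OF aligned s0] lam_s0 unfolding o_def by (intro tendsto_add)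
  then have "(\<lambda>k. (1 / norm (y (s0 k) - yb)) *\<^sub>R (y (s0 k) - yb)) \<longlonglongrightarrow> lm" by simp
  from eventually_sign_aligned[OF fin this]
  obtain N1 where N1: "\<And>k. k \<ge> N1 \<Longrightarrow>
      \<forall>e\<in>E. inner lm e \<noteq> 0 \<longrightarrow> inner lm e * inner (y (s0 k) - yb) e > 0"
    unfolding eventually_sequentially by blast
  define s where "s k = s0 (k + N1)" for k
  have "strict_mono s" using s0 unfolding s_def strict_mono_def by simp
  note along_s = LIMSEQ_subseq_LIMSEQ[OF _ this, unfolded o_def]
  have Ps: "P (s k)" for k unfolding s_def s0_def by (rule N0) simp
  have signs: "\<forall>e\<in>E. inner lm e \<noteq> 0 \<longrightarrow> inner lm e * inner (y (s k) - yb) e > 0" for k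
    unfolding s_def using N1 by simp
  have lam_s: "(\<lambda>k. lam (s k)) \<longlonglongrightarrow> lm"
    using LIMSEQ_ignore_initial_segment[OF lam_s0, of N1] unfolding s_def by simp
  have ker: "lm \<in> ker_mm (dir_coderiv \<Phi> xb yb u 0)"
  proof (rule limit_multiplier_in_ker_dir_coderiv[where x="\<lambda>k. x (s k)" and y="\<lambda>k. y (s k)"
        and \<eta>="\<lambda>k. \<eta> (s k)" and lam="\<lambda>k. lam (s k)"])
    show "(x (s k), y (s k)) \<in> gph \<Phi> \<and> x (s k) \<noteq> xb \<and>
        \<eta> (s k) \<in> reg_coderiv \<Phi> (x (s k)) (y (s k)) (lam (s k))" for k
      using Ps[of k] unfolding P_def by blast
  qed (fact lam_s along_s[OF lx] along_s[OF l\<eta>] along_s[OF lu] along_s[OF l0])+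
  have "lm \<noteq> 0" using lm by auto
  show False
  proof (rule notE[OF qn[unfolded quasi_normal_dir_def]], intro exI[of _ lm] conjI ker \<open>lm \<noteq> 0\<close>,
      rule exI[of _ "\<lambda>k. x (s k)"], rule exI[of _ "\<lambda>k. y (s k)"], rule exI[of _ "\<lambda>k. lam (s k)"],
      rule exI[of _ "\<lambda>k. \<eta> (s k)"], intro conjI allI)
    fix k
    show "(x (s k), y (s k)) \<in> gph \<Phi>" "x (s k) \<noteq> xb"
      "\<eta> (s k) \<in> reg_coderiv \<Phi> (x (s k)) (y (s k)) (lam (s k))"
      using Ps[of k] unfolding P_def by blast+
  qed (fact signs lam_s along_s[OF lx] along_s[OF ly] along_s[OF l\<eta>] along_s[OF lu] along_s[OF l0])+
qed

lemma reg_normal_cone_of_quadratic_bound: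
  assumes "z \<in> Q" "\<delta>\<^sub>0 > 0" "C > 0"
    and bound: "\<And>z'. z' \<in> Q \<Longrightarrow> norm (z' - z) < \<delta>\<^sub>0 \<Longrightarrow> inner \<eta> (z' - z) \<le> C * (norm (z' - z))\<^sup>2"
  shows "\<eta> \<in> reg_normal_cone Q z"
  unfolding reg_normal_cone_def
proof (intro CollectI conjI allI impI \<open>z \<in> Q\<close>)
  fix \<epsilon> :: real assume "\<epsilon> > 0"
  define \<delta> where "\<delta> = min (\<epsilon> / C) \<delta>\<^sub>0"
  have "inner \<eta> (z' - z) \<le> \<epsilon> * norm (z' - z)" if "z' \<in> Q" "norm (z' - z) < \<delta>" for z'
  proof -
    have "C * norm (z' - z) \<le> \<epsilon>"
      using that(2) \<open>C > 0\<close> unfolding \<delta>_def by (simp add: field_simps)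
    then have "C * (norm (z' - z))\<^sup>2 \<le> \<epsilon> * norm (z' - z)"
      using mult_right_mono[of "C * norm (z' - z)" \<epsilon> "norm (z' - z)"] by (simp add: power2_eq_square)
    with bound[OF that(1)] that(2) show ?thesis unfolding \<delta>_def by fastforce
  qed
  moreover have "\<delta> > 0" using \<open>\<epsilon> > 0\<close> assms(2,3) unfolding \<delta>_def by simp
  ultimately show "\<exists>\<delta>>0. \<forall>z'\<in>Q. norm (z' - z) < \<delta> \<longrightarrow> inner \<eta> (z' - z) \<le> \<epsilon> * norm (z' - z)"
    by blast
qed

text \<open>Minimality of the penalty, combined with the quadratic majorant of the norm at
  \<open>y\<^sub>t - y\<^sub>b\<close>, bounds the first-order term by \<open>C \<parallel>z' - (x\<^sub>t, y\<^sub>t)\<parallel>\<^sup>2\<close>.\<close>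

lemma reg_coderiv_at_penalized_min:
  fixes \<Phi> :: "'a::euclidean_space \<Rightarrow> 'b::euclidean_space set"
  assumes g: "(xt, yt) \<in> gph \<Phi>" and "yt \<noteq> yb" "\<alpha> > 0" "norm (xt - x0) < R"
    and min: "\<And>x y. (x, y) \<in> gph \<Phi> \<Longrightarrow> norm (x - x0) \<le> R \<Longrightarrow>
              norm (yt - yb) + \<alpha> * (norm (xt - x0))\<^sup>2 \<le> norm (y - yb) + \<alpha> * (norm (x - x0))\<^sup>2"
  shows "- (2 * \<alpha>) *\<^sub>R (xt - x0) \<in> reg_coderiv \<Phi> xt yt ((1 / norm (yt - yb)) *\<^sub>R (yt - yb))"
proof -
  define a where "a = yt - yb"
  define lam where "lam = (1 / norm a) *\<^sub>R a"
  define C where "C = 1 / (2 * norm a) + \<alpha>"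
  have na: "norm a > 0" using \<open>yt \<noteq> yb\<close> unfolding a_def by simp
  have "(- (2 * \<alpha>) *\<^sub>R (xt - x0), - lam) \<in> reg_normal_cone (gph \<Phi>) (xt, yt)"
  proof (rule reg_normal_cone_of_quadratic_bound[OF g])
    show "R - norm (xt - x0) > 0" "C > 0" using assms na unfolding C_def by (simp_all add: add_pos_pos)
    fix z' assume zg: "z' \<in> gph \<Phi>" and zd: "norm (z' - (xt, yt)) < R - norm (xt - x0)"
    obtain x y where z': "z' = (x, y)" by (cases z')
    define dx where "dx = x - xt"
    define dy where "dy = y - yt"
    have zz: "z' - (xt, yt) = (dx, dy)" unfolding z' dx_def dy_def by simp
    have ndx: "norm dx \<le> norm (z' - (xt, yt))" unfolding zz by (rule norm_fst_le)
    have ndy: "norm dy \<le> norm (z' - (xt, yt))" unfolding zz by (rule norm_snd_le)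
    have "norm (x - x0) \<le> norm dx + norm (xt - x0)"
      unfolding dx_def using norm_triangle_ineq[of "x - xt" "xt - x0"] by simp
    then have "norm (x - x0) \<le> R" using ndx zd by linarith
    then have hm: "norm (yt - yb) + \<alpha> * (norm (xt - x0))\<^sup>2 \<le> norm (y - yb) + \<alpha> * (norm (x - x0))\<^sup>2"
      using min zg unfolding z' by blast
    have "norm (y - yb) \<le> norm a + inner lam dy + (norm dy)\<^sup>2 / (2 * norm a)"
      using norm_le_quadratic_majorant[of a "y - yb"] na unfolding a_def lam_def dy_def by simp
    moreover have "(norm (x - x0))\<^sup>2 = (norm (xt - x0))\<^sup>2 + (2 * inner (xt - x0) dx + (norm dx)\<^sup>2)"
    proof -
      have "x - x0 = (xt - x0) + dx" unfolding dx_def by simp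
      then show ?thesis by (simp add: power2_norm_eq_inner inner_add inner_commute algebra_simps)
    qed
    then have "\<alpha> * (norm (x - x0))\<^sup>2 = \<alpha> * (norm (xt - x0))\<^sup>2 + \<alpha> * (2 * inner (xt - x0) dx + (norm dx)\<^sup>2)"
      by (simp add: distrib_left)
    ultimately have "0 \<le> inner lam dy + (norm dy)\<^sup>2 / (2 * norm a) + \<alpha> * (2 * inner (xt - x0) dx + (norm dx)\<^sup>2)"
      using hm unfolding a_def by linarith
    then have "inner (- (2 * \<alpha>) *\<^sub>R (xt - x0), - lam) (dx, dy)
        \<le> (norm dy)\<^sup>2 / (2 * norm a) + \<alpha> * (norm dx)\<^sup>2"
      by (simp add: inner_Pair algebra_simps)
    also have "\<dots> \<le> C * (norm (z' - (xt, yt)))\<^sup>2"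
    proof -
      have "(norm dy)\<^sup>2 / (2 * norm a) \<le> (norm (z' - (xt, yt)))\<^sup>2 / (2 * norm a)"
        using ndy na by (intro divide_right_mono power_mono) auto
      moreover have "\<alpha> * (norm dx)\<^sup>2 \<le> \<alpha> * (norm (z' - (xt, yt)))\<^sup>2"
        using ndx \<open>\<alpha> > 0\<close> by (intro mult_left_mono power_mono) auto
      ultimately show ?thesis unfolding C_def by (simp add: algebra_simps)
    qed
    finally show "inner (- (2 * \<alpha>) *\<^sub>R (xt - x0), - lam) (z' - (xt, yt)) \<le> C * (norm (z' - (xt, yt)))\<^sup>2"
      unfolding zz .
  qed
  then show ?thesis unfolding reg_coderiv_def lam_def a_def by simp
qed

lemma penalized_min_exists:
  fixes \<Phi> :: "'a::euclidean_space \<Rightarrow> 'b::euclidean_space set"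
  assumes "closed (gph \<Phi>)" "(x0, y0) \<in> gph \<Phi>" "\<alpha> \<ge> 0" "r \<ge> 0"
  obtains xt yt where "(xt, yt) \<in> gph \<Phi>"
    "norm (yt - yb) + \<alpha> * (norm (xt - x0))\<^sup>2 \<le> norm (y0 - yb)"
    "\<And>x y. (x, y) \<in> gph \<Phi> \<Longrightarrow> norm (x - x0) \<le> r \<Longrightarrow>
       norm (yt - yb) + \<alpha> * (norm (xt - x0))\<^sup>2 \<le> norm (y - yb) + \<alpha> * (norm (x - x0))\<^sup>2"
proof -
  define h where "h z = norm (snd z - yb) + \<alpha> * (norm (fst z - x0))\<^sup>2" for z :: "'a \<times> 'b"
  define K where "K = gph \<Phi> \<inter> (cball x0 r \<times> cball yb (norm (y0 - yb)))"
  have "compact K" unfolding K_def using assms(1) by (intro closed_Int_compact compact_Times compact_cball)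
  moreover have K0: "(x0, y0) \<in> K"
    using assms(2,4) unfolding K_def by (simp add: dist_norm norm_minus_commute)
  moreover have "continuous_on K h" unfolding h_def by (intro continuous_intros)
  ultimately obtain zt where zt: "zt \<in> K" "\<And>z. z \<in> K \<Longrightarrow> h zt \<le> h z"
    using continuous_attains_inf[of K h] by blast
  obtain xt yt where zte: "zt = (xt, yt)" by (cases zt)
  have le_y0: "h zt \<le> norm (y0 - yb)" using zt(2)[OF K0] unfolding h_def by simp
  show thesis
  proof (rule that)
    show "(xt, yt) \<in> gph \<Phi>" using zt(1) unfolding zte K_def by simp
    show "norm (yt - yb) + \<alpha> * (norm (xt - x0))\<^sup>2 \<le> norm (y0 - yb)" using le_y0 unfolding zte h_def by simp
    fix x y assume "(x, y) \<in> gph \<Phi>" "norm (x - x0) \<le> r"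
    show "norm (yt - yb) + \<alpha> * (norm (xt - x0))\<^sup>2 \<le> norm (y - yb) + \<alpha> * (norm (x - x0))\<^sup>2"
    proof (cases "norm (y - yb) \<le> norm (y0 - yb)")
      case True
      then have "(x, y) \<in> K" unfolding K_def using \<open>(x, y) \<in> gph \<Phi>\<close> \<open>norm (x - x0) \<le> r\<close>
        by (simp add: dist_norm norm_minus_commute)
      then show ?thesis using zt(2) unfolding zte h_def by fastforce
    next
      case False
      then show ?thesis using le_y0 assms(3) unfolding zte h_def by (simp add: add_increasing2)
    qed
  qed
qed

lemma dir_nbhd_perturbation:
  fixes u x0 xb xt :: "'a::real_normed_vector"
  assumes "norm u = 1" "N \<ge> 2" "x0 - xb \<in> dir_nbhd (1 / N) (1 / N) u" "x0 \<noteq> xb"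
    and close: "norm (xt - x0) \<le> norm (x0 - xb) / N"
  shows "norm (x0 - xb) / 2 \<le> norm (xt - xb)" "norm (xt - xb) \<le> 2 / N"
    "norm ((1 / norm (xt - xb)) *\<^sub>R (xt - xb) - u) \<le> 4 / N"
proof -
  define \<tau> where "\<tau> = norm (x0 - xb)"
  have "\<tau> > 0" using assms(4) unfolding \<tau>_def by simp
  have \<tau>_le: "\<tau> \<le> 1 / N" and \<tau>u: "norm (\<tau> *\<^sub>R u - (x0 - xb)) \<le> \<tau> / N"
    using assms(1,3) unfolding dir_nbhd_def \<tau>_def by auto
  have "\<tau> / N \<le> \<tau> / 2" using assms(2) \<open>\<tau> > 0\<close> by (intro divide_left_mono) auto
  have "\<tau> \<le> norm (xt - xb) + norm (xt - x0)"
    using norm_triangle_ineq4[of "xt - xb" "xt - x0"] unfolding \<tau>_def by simp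
  then show lower: "\<tau> / 2 \<le> norm (xt - xb)"
    using close \<open>\<tau> / N \<le> \<tau> / 2\<close> unfolding \<tau>_def by linarith
  have "norm (xt - xb) \<le> norm (xt - x0) + \<tau>"
    using norm_triangle_ineq[of "xt - x0" "x0 - xb"] unfolding \<tau>_def by simp
  also have "\<dots> \<le> 2 / N" using close \<tau>_le \<open>\<tau> / N \<le> \<tau> / 2\<close> \<open>\<tau> > 0\<close> unfolding \<tau>_def by linarith
  finally show "norm (xt - xb) \<le> 2 / N" .
  have "norm ((xt - xb) - \<tau> *\<^sub>R u) \<le> norm (xt - x0) + norm (\<tau> *\<^sub>R u - (x0 - xb))"
    using norm_triangle_ineq4[of "xt - x0" "\<tau> *\<^sub>R u - (x0 - xb)"] by (simp add: algebra_simps)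
  also have "\<dots> \<le> (2 / N) * \<tau>" using close \<tau>u unfolding \<tau>_def by simp
  finally have "norm ((xt - xb) - \<tau> *\<^sub>R u) \<le> (2 / N) * \<tau>" .
  moreover have "xt \<noteq> xb" using lower \<open>\<tau> > 0\<close> by auto
  ultimately show "norm ((1 / norm (xt - xb)) *\<^sub>R (xt - xb) - u) \<le> 4 / N"
    using norm_normalized_diff_le[OF assms(1) _ \<open>\<tau> > 0\<close>, of "xt - xb" "2 / N"] by simp
qed

lemma quadratic_penalty_bound:
  fixes d N t :: real
  assumes "N\<^sup>2 / d * t\<^sup>2 < d / N ^ 4" "d > 0" "N > 0"
  shows "t < d / N ^ 3"
proof -
  have "t\<^sup>2 < (d / N ^ 4) / (N\<^sup>2 / d)"
    using assms by (subst pos_less_divide_eq) (auto simp: mult.commute)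
  also have "\<dots> = (d / N ^ 3)\<^sup>2"
    using assms(2,3) by (simp add: field_simps power2_eq_square power_numeral_reduce)
  finally show ?thesis
    using power_less_imp_less_base[of t 2 "d / N ^ 3"] assms(2,3) by simp
qed

text \<open>With \<open>d = dist(x\<^sub>0, \<Phi>\<^sup>-\<^sup>1(y\<^sub>b))\<close> and penalty weight \<open>N\<^sup>2/d\<close>, the minimiser stays within
  \<open>d/N\<^sup>3\<close> of \<open>x\<^sub>0\<close>; this is small enough to keep it off \<open>\<Phi>\<^sup>-\<^sup>1(y\<^sub>b)\<close> and inside the
  directional neighbourhood, while the coderivative element has size \<open>2 (N\<^sup>2/d) (d/N\<^sup>3) = 2/N\<close>.\<close>

lemma subregularity_violation_yields_aligned_normal:
  fixes \<Phi> :: "'a::euclidean_space \<Rightarrow> 'b::euclidean_space set"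
  assumes cl: "closed (gph \<Phi>)" and "(xb, yb) \<in> gph \<Phi>" and "norm u = 1" and N: "N \<ge> 2"
    and nbhd: "x0 - xb \<in> dir_nbhd (1 / N) (1 / N) u" and "\<Phi> x0 \<noteq> {}"
    and violation: "infdist x0 (preimg \<Phi> yb) > N ^ 4 * infdist yb (\<Phi> x0)"
  shows "\<exists>x y \<eta>. (x, y) \<in> gph \<Phi> \<and> x \<noteq> xb \<and> y \<noteq> yb \<and>
           \<eta> \<in> reg_coderiv \<Phi> x y ((1 / norm (y - yb)) *\<^sub>R (y - yb)) \<and> norm \<eta> \<le> 2 / N \<and>
           norm (x - xb) \<le> 2 / N \<and> norm (y - yb) \<le> (2 / N) * norm (x - xb) \<and>
           norm ((1 / norm (x - xb)) *\<^sub>R (x - xb) - u) \<le> 4 / N"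
proof -
  define S where "S = preimg \<Phi> yb"
  define d where "d = infdist x0 S"
  define \<tau> where "\<tau> = norm (x0 - xb)"
  define \<alpha> where "\<alpha> = N\<^sup>2 / d"
  have "N > 0" using N by simp
  have "xb \<in> S" using assms(2) unfolding S_def preimg_def gph_def by simp
  have "N ^ 4 * infdist yb (\<Phi> x0) \<ge> 0" using \<open>N > 0\<close> by (simp add: infdist_nonneg)
  then have "d > 0" using violation unfolding d_def S_def by linarith
  have "d \<le> \<tau>" unfolding d_def \<tau>_def using infdist_le[OF \<open>xb \<in> S\<close>, of x0] by (simp add: dist_norm)
  have "infdist yb (\<Phi> x0) < d / N ^ 4"
    using violation \<open>N > 0\<close> unfolding d_def S_def by (simp add: field_simps)
  then obtain y0 where "y0 \<in> \<Phi> x0" and y0_close: "norm (y0 - yb) < d / N ^ 4"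
    using infdist_lessE \<open>\<Phi> x0 \<noteq> {}\<close> by (metis dist_norm norm_minus_commute)
  have "\<alpha> > 0" unfolding \<alpha>_def using \<open>d > 0\<close> \<open>N > 0\<close> by simp
  have "(x0, y0) \<in> gph \<Phi>" using \<open>y0 \<in> \<Phi> x0\<close> unfolding gph_def by simp
  have "d / 2 \<ge> 0" using \<open>d > 0\<close> by simp
  obtain xt yt where gt: "(xt, yt) \<in> gph \<Phi>"
    and penalty: "norm (yt - yb) + \<alpha> * (norm (xt - x0))\<^sup>2 \<le> norm (y0 - yb)"
    and min: "\<And>x y. (x, y) \<in> gph \<Phi> \<Longrightarrow> norm (x - x0) \<le> d / 2 \<Longrightarrow>
       norm (yt - yb) + \<alpha> * (norm (xt - x0))\<^sup>2 \<le> norm (y - yb) + \<alpha> * (norm (x - x0))\<^sup>2"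
    by (rule penalized_min_exists[OF cl \<open>(x0, y0) \<in> gph \<Phi>\<close> less_imp_le[OF \<open>\<alpha> > 0\<close>]
        \<open>d / 2 \<ge> 0\<close>, where yb=yb]) blast
  define q where "q = d / N ^ 3"
  have "\<alpha> * (norm (xt - x0))\<^sup>2 < d / N ^ 4"
    using penalty y0_close norm_ge_zero[of "yt - yb"] by linarith
  then have xt_close: "norm (xt - x0) < q"
    unfolding q_def \<alpha>_def using \<open>d > 0\<close> \<open>N > 0\<close> by (rule quadratic_penalty_bound)
  have "q \<le> d / 8"
    using power_mono[OF N, of 3] \<open>d > 0\<close> \<open>N > 0\<close> unfolding q_def by (intro divide_left_mono) auto
  have "N ^ 3 \<ge> N" "N ^ 4 \<ge> N" using N power_increasing[of 1 _ N] by auto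
  then have "q \<le> d / N" "d / N ^ 4 \<le> d / N"
    using \<open>d > 0\<close> \<open>N > 0\<close> unfolding q_def by (auto intro: divide_left_mono)
  moreover have "d / N \<le> \<tau> / N" using \<open>d \<le> \<tau>\<close> \<open>N > 0\<close> by (simp add: divide_right_mono)
  ultimately have "q \<le> \<tau> / N" "d / N ^ 4 \<le> \<tau> / N" by linarith+
  have "xt \<notin> S"
  proof
    assume "xt \<in> S"
    then have "d \<le> norm (xt - x0)"
      unfolding d_def using infdist_le by (metis dist_norm norm_minus_commute)
    then show False using xt_close \<open>q \<le> d / 8\<close> \<open>d > 0\<close> by simp
  qed
  then have "yt \<noteq> yb" using gt unfolding S_def preimg_def gph_def by auto
  have "xt \<noteq> xb" using \<open>xt \<notin> S\<close> \<open>xb \<in> S\<close> by auto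
  have \<eta>: "- (2 * \<alpha>) *\<^sub>R (xt - x0) \<in> reg_coderiv \<Phi> xt yt ((1 / norm (yt - yb)) *\<^sub>R (yt - yb))"
    using reg_coderiv_at_penalized_min[OF gt \<open>yt \<noteq> yb\<close> \<open>\<alpha> > 0\<close> _ min] xt_close \<open>q \<le> d / 8\<close> \<open>d > 0\<close>
    by simp
  have "norm (- (2 * \<alpha>) *\<^sub>R (xt - x0)) = 2 * \<alpha> * norm (xt - x0)" using \<open>\<alpha> > 0\<close> by simp
  also have "\<dots> \<le> 2 * \<alpha> * q" using xt_close \<open>\<alpha> > 0\<close> by simp
  also have "\<dots> = 2 / N" unfolding \<alpha>_def q_def using \<open>d > 0\<close> \<open>N > 0\<close>
    by (simp add: power_numeral_reduce field_simps)
  finally have \<eta>_small: "norm (- (2 * \<alpha>) *\<^sub>R (xt - x0)) \<le> 2 / N" .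
  have "x0 \<noteq> xb" using \<open>d \<le> \<tau>\<close> \<open>d > 0\<close> unfolding \<tau>_def by auto
  note estimates = dir_nbhd_perturbation[OF \<open>norm u = 1\<close> N nbhd this, of xt]
  have "norm (xt - x0) \<le> \<tau> / N" using xt_close \<open>q \<le> \<tau> / N\<close> by simp
  note estimates = estimates[unfolded \<tau>_def[symmetric], OF this]
  have "\<alpha> * (norm (xt - x0))\<^sup>2 \<ge> 0" using \<open>\<alpha> > 0\<close> by simp
  then have "norm (yt - yb) \<le> \<tau> / N"
    using penalty y0_close \<open>d / N ^ 4 \<le> \<tau> / N\<close> by linarith
  also have "\<tau> / N \<le> (2 / N) * norm (xt - xb)" using estimates(1) \<open>N > 0\<close> by (simp add: field_simps)
  finally have "norm (yt - yb) \<le> (2 / N) * norm (xt - xb)" .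
  with gt \<open>xt \<noteq> xb\<close> \<open>yt \<noteq> yb\<close> \<eta> \<eta>_small estimates(2,3) show ?thesis
    by (intro exI[of _ xt] exI[of _ yt] exI[of _ "- (2 * \<alpha>) *\<^sub>R (xt - x0)"] conjI)
qed

lemma quasi_normal_dir_imp_strongly_asymp_regular_dir:
  fixes \<Phi> :: "'a::euclidean_space \<Rightarrow> 'b::euclidean_space set"
  assumes "(xb, yb) \<in> gph \<Phi>" "finite E" "quasi_normal_dir \<Phi> xb yb u E"
  shows "strongly_asymp_regular_dir \<Phi> xb yb u"
  unfolding strongly_asymp_regular_dir_def
proof (intro allI impI, elim conjE)
  fix x y xs lam and xst :: 'a and yst :: 'b
  assume pts: "\<forall>k. (x k, y k) \<in> gph \<Phi> \<and> x k \<notin> preimg \<Phi> yb \<and> y k \<noteq> yb \<and>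
             xs k \<in> reg_coderiv \<Phi> (x k) (y k) (lam k)"
    and lim: "x \<longlonglongrightarrow> xb" "y \<longlonglongrightarrow> yb" "xs \<longlonglongrightarrow> xst"
      "(\<lambda>k. (1 / norm (x k - xb)) *\<^sub>R (x k - xb)) \<longlonglongrightarrow> u"
      "(\<lambda>k. (1 / norm (x k - xb)) *\<^sub>R (y k - yb)) \<longlonglongrightarrow> 0"
    and unbounded: "filterlim (\<lambda>k. norm (lam k)) at_top sequentially"
    and aligned: "(\<lambda>k. (1 / norm (y k - yb)) *\<^sub>R (y k - yb) - (1 / norm (lam k)) *\<^sub>R lam k) \<longlonglongrightarrow> 0"
    and "(\<lambda>k. (norm (y k - yb) / norm (x k - xb)) *\<^sub>R lam k) \<longlonglongrightarrow> yst"
  have "xb \<in> preimg \<Phi> yb" using assms(1) unfolding preimg_def gph_def by simp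
  have "\<forall>\<^sub>F k in sequentially. norm (lam k) \<ge> 1" using unbounded by (simp add: filterlim_at_top)
  then have "\<forall>\<^sub>F k in sequentially. (x k, y k) \<in> gph \<Phi> \<and> x k \<noteq> xb \<and>
      norm ((1 / norm (lam k)) *\<^sub>R lam k) = 1 \<and>
      (1 / norm (lam k)) *\<^sub>R xs k \<in> reg_coderiv \<Phi> (x k) (y k) ((1 / norm (lam k)) *\<^sub>R lam k)"
  proof (rule eventually_mono)
    fix k assume "norm (lam k) \<ge> 1"
    then have "lam k \<noteq> 0" by auto
    have "(xs k, - lam k) \<in> reg_normal_cone (gph \<Phi>) (x k, y k)"
      using pts unfolding reg_coderiv_def by blast
    from reg_normal_cone_scaleR[OF this, of "1 / norm (lam k)"] \<open>lam k \<noteq> 0\<close>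
    have "(1 / norm (lam k)) *\<^sub>R xs k \<in> reg_coderiv \<Phi> (x k) (y k) ((1 / norm (lam k)) *\<^sub>R lam k)"
      unfolding reg_coderiv_def by simp
    then show "(x k, y k) \<in> gph \<Phi> \<and> x k \<noteq> xb \<and> norm ((1 / norm (lam k)) *\<^sub>R lam k) = 1 \<and>
        (1 / norm (lam k)) *\<^sub>R xs k \<in> reg_coderiv \<Phi> (x k) (y k) ((1 / norm (lam k)) *\<^sub>R lam k)"
      using pts \<open>lam k \<noteq> 0\<close> \<open>xb \<in> preimg \<Phi> yb\<close> by auto
  qed
  moreover have "(\<lambda>k. (1 / norm (lam k)) *\<^sub>R xs k) \<longlonglongrightarrow> 0"
    using tendsto_scaleR[OF tendsto_inverse_0_at_top[OF unbounded] lim(3)] by (simp add: divide_inverse)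
  ultimately have False
    by (rule quasi_normal_dir_no_aligned_unit_multipliers[OF assms(3,2) _ lim(1,2) _ lim(4,5) aligned])
  then show "xst \<in> Im_mm (dir_coderiv \<Phi> xb yb u 0)" ..
qed

lemma quasi_normal_dir_imp_metric_subregular_dir:
  fixes \<Phi> :: "'a::euclidean_space \<Rightarrow> 'b::euclidean_space set"
  assumes "closed (gph \<Phi>)" "(xb, yb) \<in> gph \<Phi>" "norm u = 1" "finite E"
    and "quasi_normal_dir \<Phi> xb yb u E"
  shows "metric_subregular_dir \<Phi> xb yb u"
proof (rule ccontr)
  define N :: "nat \<Rightarrow> real" where "N n = real n + 2" for n
  assume "\<not> metric_subregular_dir \<Phi> xb yb u"
  then have "\<exists>x0. x0 - xb \<in> dir_nbhd (1 / N n) (1 / N n) u \<and> \<Phi> x0 \<noteq> {} \<and>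
      infdist x0 (preimg \<Phi> yb) > N n ^ 4 * infdist yb (\<Phi> x0)" for n
    unfolding metric_subregular_dir_def N_def by (auto simp: not_le)
  then have "\<exists>x y \<eta>. (x, y) \<in> gph \<Phi> \<and> x \<noteq> xb \<and> y \<noteq> yb \<and>
      \<eta> \<in> reg_coderiv \<Phi> x y ((1 / norm (y - yb)) *\<^sub>R (y - yb)) \<and> norm \<eta> \<le> 2 / N n \<and>
      norm (x - xb) \<le> 2 / N n \<and> norm (y - yb) \<le> (2 / N n) * norm (x - xb) \<and>
      norm ((1 / norm (x - xb)) *\<^sub>R (x - xb) - u) \<le> 4 / N n" for n
    using subregularity_violation_yields_aligned_normal[OF assms(1-3), of "N n"]
    unfolding N_def by fastforce
  then obtain x y \<eta> where pts: "\<And>n. (x n, y n) \<in> gph \<Phi> \<and> x n \<noteq> xb \<and> y n \<noteq> yb \<and>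
      \<eta> n \<in> reg_coderiv \<Phi> (x n) (y n) ((1 / norm (y n - yb)) *\<^sub>R (y n - yb)) \<and> norm (\<eta> n) \<le> 2 / N n \<and>
      norm (x n - xb) \<le> 2 / N n \<and> norm (y n - yb) \<le> (2 / N n) * norm (x n - xb) \<and>
      norm ((1 / norm (x n - xb)) *\<^sub>R (x n - xb) - u) \<le> 4 / N n"
    by metis
  have to_zero: "(\<lambda>n. c / N n) \<longlonglongrightarrow> 0" for c
    unfolding N_def by (rule const_over_Suc_Suc_tendsto_zero)
  have "2 / N n \<le> 1" for n unfolding N_def by simp
  then have y_over_x: "norm (y n - yb) / norm (x n - xb) \<le> 2 / N n" for n
    using pts[of n] by (simp add: divide_le_eq)
  have "norm (y n - yb) \<le> 2 / N n" for n
  proof -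
    have "norm (y n - yb) \<le> (2 / N n) * norm (x n - xb)" using pts by blast
    also have "\<dots> \<le> norm (x n - xb)" using mult_right_mono[OF \<open>2 / N n \<le> 1\<close> norm_ge_zero] by simp
    also have "\<dots> \<le> 2 / N n" using pts by blast
    finally show ?thesis .
  qed
  show False
  proof (rule quasi_normal_dir_no_aligned_unit_multipliers[OF assms(5,4)])
    show "\<forall>\<^sub>F n in sequentially. (x n, y n) \<in> gph \<Phi> \<and> x n \<noteq> xb \<and>
        norm ((1 / norm (y n - yb)) *\<^sub>R (y n - yb)) = 1 \<and>
        \<eta> n \<in> reg_coderiv \<Phi> (x n) (y n) ((1 / norm (y n - yb)) *\<^sub>R (y n - yb))"
      using pts by simp
    show "x \<longlonglongrightarrow> xb" "\<eta> \<longlonglongrightarrow> 0"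
      using pts by (auto intro!: tendsto_of_norm_diff_le[OF _ to_zero[of 2]])
    show "y \<longlonglongrightarrow> yb"
      using \<open>\<And>n. norm (y n - yb) \<le> 2 / N n\<close> by (rule tendsto_of_norm_diff_le[OF _ to_zero])
    show "(\<lambda>n. (1 / norm (x n - xb)) *\<^sub>R (x n - xb)) \<longlonglongrightarrow> u"
      using pts by (auto intro!: tendsto_of_norm_diff_le[OF _ to_zero[of 4]])
    show "(\<lambda>n. (1 / norm (x n - xb)) *\<^sub>R (y n - yb)) \<longlonglongrightarrow> 0"
      using y_over_x by (auto intro!: tendsto_of_norm_diff_le[OF _ to_zero[of 2]])
  qed simp
qed

theorem mainTheorem4:
  fixes \<Phi> :: "'a::euclidean_space \<Rightarrow> 'b::euclidean_space set"
    and xb :: 'a and yb :: 'b and u :: 'a and E :: "'b set"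
  assumes "closed (gph \<Phi>)"
    and "(xb, yb) \<in> gph \<Phi>"
    and "norm u = 1"
    and "orthonormal_basis E"
    and "quasi_normal_dir \<Phi> xb yb u E"
  shows "strongly_asymp_regular_dir \<Phi> xb yb u \<and> metric_subregular_dir \<Phi> xb yb u"
proof
  have "finite E" using assms(4) by (rule orthonormal_basis_finite)
  show "strongly_asymp_regular_dir \<Phi> xb yb u"
    using assms(2) \<open>finite E\<close> assms(5) by (rule quasi_normal_dir_imp_strongly_asymp_regular_dir)
  show "metric_subregular_dir \<Phi> xb yb u"
    using assms(1-3) \<open>finite E\<close> assms(5) by (rule quasi_normal_dir_imp_metric_subregular_dir)
qed

end
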